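(* Let $\boldsymbol{\Sigma}$ be a given $n\times n$ positive definite covariance matrix, and consider its multi-resolution decomposition (defined in the context) with $M$ resolutions and the same number $r_m=r$ of knots per region at every resolution $m=0,\dots,M$, so that $N=(M+1)r$. Then $\mathbf{B}=\mathrm{mrd}(\boldsymbol{\Sigma})$ can be computed in $\mathcal{O}(nN^2)$ time using the recursion defining the MRD.
   Context: Setting for the MRD. Grid indices $\mathcal{I}=\{1,\dots,n\}$ are recursively partitioned: for $m=0,\dots,M-1$ and $(j_1,\dots,j_m)\in\{1,\dots,J\}^m$, $\mathcal{I}_{j_1,\dots,j_m}$ (with $\mathcal{I}_{\emptyset}=\mathcal{I}$) is the disjoint union of $\mathcal{I}_{j_1,\dots,j_m,j_{m+1}}$, $j_{m+1}=1,\dots,J$; indices are ordered so finest sets $\mathcal{I}_{j_1,\dots,j_M}$ are contiguous in lexicographic order. Knot sets $\mathcal{K}_{j_1,\dots,j_m}\subset\mathcal{I}_{j_1,\dots,j_m}\setminus\mathcal{K}^{0:m-1}$, $|\mathcal{K}_{j_1,\dots,j_m}|=r_m$, chosen sequentially for $m=0,\dots,M$ (with $\mathcal{K}^m=\bigcup\mathcal{K}_{j_1,\dots,j_m}$, $\mathcal{K}^{0:m}=\bigcup_{l\le m}\mathcal{K}^l$) so that all knot sets partition $\mathcal{I}$. The MRD algorithm: for $m=0,\dots,M$, each $(j_1,\dots,j_m)$ and $\ell=0,\dots,m$, compute $\mathbf{W}^\ell_{j_1,\dots,j_m}=\boldsymbol{\Sigma}[\mathcal{I}_{j_1,\dots,j_m},\mathcal{K}_{j_1,\dots,j_\ell}]-\sum_{k=0}^{\ell-1}\mathbf{W}^k_{j_1,\dots,j_m}(\mathbf{V}^k_{j_1,\dots,j_k})^{-1}(\mathbf{V}^k_{j_1,\dots,j_\ell})'$,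 $\mathbf{V}^\ell_{j_1,\dots,j_m}=\boldsymbol{\Sigma}[\mathcal{K}_{j_1,\dots,j_m},\mathcal{K}_{j_1,\dots,j_\ell}]-\sum_{k=0}^{\ell-1}\mathbf{V}^k_{j_1,\dots,j_m}(\mathbf{V}^k_{j_1,\dots,j_k})^{-1}(\mathbf{V}^k_{j_1,\dots,j_\ell})'$, then set $\mathbf{B}_{j_1,\dots,j_m}=\mathbf{W}^m_{j_1,\dots,j_m}(\mathbf{V}^m_{j_1,\dots,j_m})^{-1/2}$; output $\mathbf{B}=(\mathbf{B}^M,\dots,\mathbf{B}^0)$ with $\mathbf{B}^m=\mathrm{blockdiag}(\{\mathbf{B}_{j_1,\dots,j_m}\})$ in lexicographic order. *)

theory Defs
  imports Complex_Main
begin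

definition posdef :: "nat \<Rightarrow> (nat \<Rightarrow> nat \<Rightarrow> real) \<Rightarrow> bool" where
  "posdef n S \<longleftrightarrow> (\<forall>i<n. \<forall>j<n. S i j = S j i) \<and>
     (\<forall>x::nat \<Rightarrow> real. (\<exists>i<n. x i \<noteq> 0) \<longrightarrow> (\<Sum>i<n. \<Sum>j<n. x i * S i j * x j) > 0)"

definition mat_inv :: "nat \<Rightarrow> (nat \<Rightarrow> nat \<Rightarrow> real) \<Rightarrow> (nat \<Rightarrow> nat \<Rightarrow> real)" where
  "mat_inv r A = (SOME X. \<forall>i<r. \<forall>j<r. (\<Sum>k<r. A i k * X k j) = (if i = j then 1 else 0))"

definition chol :: "nat \<Rightarrow> (nat \<Rightarrow> nat \<Rightarrow> real) \<Rightarrow> (nat \<Rightarrow> nat \<Rightarrow> real)" where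
  "chol r A = (SOME L. (\<forall>i<r. \<forall>j<r. i < j \<longrightarrow> L i j = 0) \<and> (\<forall>i<r. L i i > 0) \<and>
                      (\<forall>i<r. \<forall>j<r. (\<Sum>k<r. L i k * L j k) = A i j))"

(* A^{-1/2} := (L')^{-1} where A = L L' (so that A^{-1/2} (A^{-1/2})' = A^{-1}) *)
definition mat_inv_sqrt :: "nat \<Rightarrow> (nat \<Rightarrow> nat \<Rightarrow> real) \<Rightarrow> (nat \<Rightarrow> nat \<Rightarrow> real)" where
  "mat_inv_sqrt r A = (\<lambda>a b. mat_inv r (chol r A) b a)"

definition tuples :: "nat \<Rightarrow> nat \<Rightarrow> nat list set" where
  "tuples J m = {js. length js = m \<and> set js \<subseteq> {1..J}}"

(* I :: region of a tuple, K :: knot set of a tuple; r_m = r for all m *)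
definition mrd_structure ::
  "nat \<Rightarrow> nat \<Rightarrow> nat \<Rightarrow> nat \<Rightarrow> (nat list \<Rightarrow> nat set) \<Rightarrow> (nat list \<Rightarrow> nat set) \<Rightarrow> bool" where
  "mrd_structure n J M r I K \<longleftrightarrow>
     0 < J \<and>
     I [] = {0..<n} \<and>
     (\<forall>m<M. \<forall>js\<in>tuples J m.
        I js = (\<Union>j\<in>{1..J}. I (js @ [j])) \<and>
        (\<forall>j\<in>{1..J}. \<forall>j'\<in>{1..J}. j \<noteq> j' \<longrightarrow> I (js @ [j]) \<inter> I (js @ [j']) = {})) \<and>
     (\<forall>js\<in>tuples J M. \<forall>js'\<in>tuples J M. (js, js') \<in> lexord {(a, b). a < b} \<longrightarrow>
        (\<forall>i\<in>I js. \<forall>i'\<in>I js'. i < i')) \<and>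
     (\<forall>m\<le>M. \<forall>js\<in>tuples J m.
        K js \<subseteq> I js - (\<Union>l<m. K (take l js)) \<and> card (K js) = r) \<and>
     (\<Union>m\<le>M. \<Union>js\<in>tuples J m. K js) = {0..<n} \<and>
     (\<forall>m\<le>M. \<forall>m'\<le>M. \<forall>js\<in>tuples J m. \<forall>js'\<in>tuples J m'. js \<noteq> js' \<longrightarrow> K js \<inter> K js' = {})"

definition knot :: "(nat list \<Rightarrow> nat set) \<Rightarrow> nat list \<Rightarrow> nat \<Rightarrow> nat" where
  "knot K js t = sorted_list_of_set (K js) ! t"

(* V^l_{js}[s,t] : rows = knots of K_js, columns = knots of K_{take l js} *)
function mrd_V :: "(nat \<Rightarrow> nat \<Rightarrow> real) \<Rightarrow> (nat list \<Rightarrow> nat set) \<Rightarrow> nat \<Rightarrow> nat \<Rightarrow> nat list \<Rightarrow> nat \<Rightarrow> nat \<Rightarrow> real" where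
  "mrd_V S K r l js s t =
     S (knot K js s) (knot K (take l js) t) -
     (\<Sum>k<l. \<Sum>a<r. \<Sum>b<r. mrd_V S K r k js s a *
         mat_inv r (\<lambda>x y. mrd_V S K r k (take k js) x y) a b * mrd_V S K r k (take l js) t b)"
  by pat_completeness auto
termination by (relation "measure (\<lambda>(S, K, r, l, js, s, t). l)") auto

declare mrd_V.simps [simp del]

(* W^l_{js}[i,t] : row = grid index i (in I_js), column = t-th knot of K_{take l js} *)
function mrd_W :: "(nat \<Rightarrow> nat \<Rightarrow> real) \<Rightarrow> (nat list \<Rightarrow> nat set) \<Rightarrow> nat \<Rightarrow> nat \<Rightarrow> nat list \<Rightarrow> nat \<Rightarrow> nat \<Rightarrow> real" where
  "mrd_W S K r l js i t =
     S i (knot K (take l js) t) -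
     (\<Sum>k<l. \<Sum>a<r. \<Sum>b<r. mrd_W S K r k js i a *
         mat_inv r (\<lambda>x y. mrd_V S K r k (take k js) x y) a b * mrd_V S K r k (take l js) t b)"
  by pat_completeness auto
termination by (relation "measure (\<lambda>(S, K, r, l, js, i, t). l)") auto

declare mrd_W.simps [simp del]

definition mrd_B :: "(nat \<Rightarrow> nat \<Rightarrow> real) \<Rightarrow> (nat list \<Rightarrow> nat set) \<Rightarrow> nat \<Rightarrow> nat list \<Rightarrow> nat \<Rightarrow> nat \<Rightarrow> real" where
  "mrd_B S K r js i t =
     (\<Sum>a<r. mrd_W S K r (length js) js i a *
        mat_inv_sqrt r (\<lambda>x y. mrd_V S K r (length js) js x y) a t)"

(* ---------- cost model: straight-line programs over the reals (algebraic/BSS model) ---------- *)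

datatype instr =
    Const real | Inp nat nat | Add nat nat | Sub nat nat | Mul nat nat | Dvd nat nat | Sqrt nat

fun step :: "(nat \<Rightarrow> nat \<Rightarrow> real) \<Rightarrow> real list \<Rightarrow> instr \<Rightarrow> real" where
  "step S vs (Const c) = c"
| "step S vs (Inp i j) = S i j"
| "step S vs (Add a b) = vs ! a + vs ! b"
| "step S vs (Sub a b) = vs ! a - vs ! b"
| "step S vs (Mul a b) = vs ! a * vs ! b"
| "step S vs (Dvd a b) = vs ! a / vs ! b"
| "step S vs (Sqrt a) = sqrt (vs ! a)"

definition eval_prog :: "instr list \<Rightarrow> (nat \<Rightarrow> nat \<Rightarrow> real) \<Rightarrow> real list" where
  "eval_prog P S = foldl (\<lambda>vs ins. vs @ [step S vs ins]) [] P"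

fun instr_ok :: "real list \<Rightarrow> instr \<Rightarrow> bool" where
  "instr_ok vs (Const c) = True"
| "instr_ok vs (Inp i j) = True"
| "instr_ok vs (Add a b) = (a < length vs \<and> b < length vs)"
| "instr_ok vs (Sub a b) = (a < length vs \<and> b < length vs)"
| "instr_ok vs (Mul a b) = (a < length vs \<and> b < length vs)"
| "instr_ok vs (Dvd a b) = (a < length vs \<and> b < length vs \<and> vs ! b \<noteq> 0)"
| "instr_ok vs (Sqrt a) = (a < length vs \<and> vs ! a \<ge> 0)"

definition prog_ok :: "instr list \<Rightarrow> (nat \<Rightarrow> nat \<Rightarrow> real) \<Rightarrow> bool" where
  "prog_ok P S \<longleftrightarrow> (\<forall>p<length P. instr_ok (eval_prog (take p P) S) (P ! p))"

end

(*
  The MRD recursion is block Gram-Schmidt orthogonalisation of the unit vectors at the knots in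
  the inner product Sigma: V^m of a node is the Gram matrix of the orthogonalised unit vectors at
  its knots, hence positive definite. With one knot per node the same argument shows that Gaussian
  elimination on a positive definite matrix has positive pivots, so every V has a Cholesky factor
  L computable with +, -, *, / and sqrt, and V^-1 = L^-T L^-1. The recursion then takes the form
  W = Sigma - sum_k B_k B_k' over the ancestors k of a node, with B = W L^-T: a system of scalar
  equations for the entries of W, B, the pivots, L and L^-1 in which every right-hand side refers
  only to unknowns of lower rank. Evaluating the equations in order of rank is a straight-line
  program. There are O((M + 1) n r) unknowns, each defined by an expression of size
  O((M + 1) r) = O(N), so the program has O(n N^2) instructions.
*)

theory Submission
  imports Defs
begin

section \<open>Straight-line programs for ranked systems of equations\<close>

datatype binop = Plus | Minus | Times | Divide

datatype 'k expr =
    EConst real | EInp nat nat | ERef 'k | EBin binop "'k expr" "'k expr" | ESqrt "'k expr"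

fun binop_instr :: "binop \<Rightarrow> nat \<Rightarrow> nat \<Rightarrow> instr" where
  "binop_instr Plus a b = Add a b"
| "binop_instr Minus a b = Sub a b"
| "binop_instr Times a b = Mul a b"
| "binop_instr Divide a b = Dvd a b"

fun binop_val :: "binop \<Rightarrow> real \<Rightarrow> real \<Rightarrow> real" where
  "binop_val Plus x y = x + y"
| "binop_val Minus x y = x - y"
| "binop_val Times x y = x * y"
| "binop_val Divide x y = x / y"

fun eval_expr :: "('k \<Rightarrow> real) \<Rightarrow> (nat \<Rightarrow> nat \<Rightarrow> real) \<Rightarrow> 'k expr \<Rightarrow> real" where
  "eval_expr v S (EConst c) = c"
| "eval_expr v S (EInp i j) = S i j"
| "eval_expr v S (ERef k) = v k"
| "eval_expr v S (EBin f e1 e2) = binop_val f (eval_expr v S e1) (eval_expr v S e2)"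
| "eval_expr v S (ESqrt e) = sqrt (eval_expr v S e)"

fun expr_defined :: "('k \<Rightarrow> real) \<Rightarrow> (nat \<Rightarrow> nat \<Rightarrow> real) \<Rightarrow> 'k expr \<Rightarrow> bool" where
  "expr_defined v S (EBin f e1 e2) \<longleftrightarrow>
     expr_defined v S e1 \<and> expr_defined v S e2 \<and> (f = Divide \<longrightarrow> eval_expr v S e2 \<noteq> 0)"
| "expr_defined v S (ESqrt e) \<longleftrightarrow> expr_defined v S e \<and> eval_expr v S e \<ge> 0"
| "expr_defined v S _ \<longleftrightarrow> True"

fun expr_refs :: "'k expr \<Rightarrow> 'k set" where
  "expr_refs (ERef k) = {k}"
| "expr_refs (EBin f e1 e2) = expr_refs e1 \<union> expr_refs e2"
| "expr_refs (ESqrt e) = expr_refs e"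
| "expr_refs _ = {}"

fun expr_size :: "'k expr \<Rightarrow> nat" where
  "expr_size (ERef k) = 0"
| "expr_size (EBin f e1 e2) = Suc (expr_size e1 + expr_size e2)"
| "expr_size (ESqrt e) = Suc (expr_size e)"
| "expr_size _ = 1"

definition esum :: "'k expr list \<Rightarrow> 'k expr" where
  "esum es = foldr (EBin Plus) es (EConst 0)"

definition emul :: "'k \<Rightarrow> 'k \<Rightarrow> 'k expr" where
  "emul x y = EBin Times (ERef x) (ERef y)"

lemma esum_simps:
  "eval_expr v S (esum es) = (\<Sum>e\<leftarrow>es. eval_expr v S e)"
  "expr_defined v S (esum es) \<longleftrightarrow> (\<forall>e\<in>set es. expr_defined v S e)"
  "expr_refs (esum es) = (\<Union>e\<in>set es. expr_refs e)"
  "expr_size (esum es) = Suc (\<Sum>e\<leftarrow>es. Suc (expr_size e))"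
  by (induction es) (simp_all add: esum_def)

lemma emul_simps [simp]:
  "eval_expr v S (emul x y) = v x * v y"
  "expr_defined v S (emul x y)"
  "expr_refs (emul x y) = {x, y}"
  "expr_size (emul x y) = 1"
  by (auto simp: emul_def)

lemma sum_list_map_upt: "(\<Sum>x\<leftarrow>[0..<n]. f x) = (\<Sum>x<n. f x)"
  by (simp add: interv_sum_list_conv_sum_set_nat atLeast0LessThan)

text \<open>The code for \<open>e\<close> is appended to a program of length \<open>b\<close> that holds the value of each
  reference \<open>k\<close> in register \<open>loc k\<close>; the second component is the register of the result.\<close>

fun compile_expr :: "('k \<Rightarrow> nat) \<Rightarrow> nat \<Rightarrow> 'k expr \<Rightarrow> instr list \<times> nat" where
  "compile_expr loc b (ERef k) = ([], loc k)"
| "compile_expr loc b (EBin f e1 e2) =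
     (let (c1, r1) = compile_expr loc b e1; (c2, r2) = compile_expr loc (b + length c1) e2
      in (c1 @ c2 @ [binop_instr f r1 r2], b + length c1 + length c2))"
| "compile_expr loc b (ESqrt e) =
     (let (c, r) = compile_expr loc b e in (c @ [Sqrt r], b + length c))"
| "compile_expr loc b (EConst c) = ([Const c], b)"
| "compile_expr loc b (EInp i j) = ([Inp i j], b)"

lemma length_compile_expr: "length (fst (compile_expr loc b e)) = expr_size e"
  by (induction e arbitrary: b) (auto simp: split_beta Let_def)

lemma length_eval_prog [simp]: "length (eval_prog P S) = length P"
  by (induction P rule: rev_induct) (auto simp: eval_prog_def)

lemma eval_prog_snoc: "eval_prog (P @ [x]) S = eval_prog P S @ [step S (eval_prog P S) x]"
  by (simp add: eval_prog_def)

lemma eval_prog_append_nth: "i < length P \<Longrightarrow> eval_prog (P @ Q) S ! i = eval_prog P S ! i"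
proof (induction Q rule: rev_induct)
  case (snoc x Q)
  then show ?case
    using eval_prog_snoc[of "P @ Q" x S] by (simp add: nth_append)
qed simp

lemma prog_ok_snoc: "prog_ok (P @ [x]) S \<longleftrightarrow> prog_ok P S \<and> instr_ok (eval_prog P S) x"
  unfolding prog_ok_def by (auto simp: nth_append less_Suc_eq)

definition program_computes ::
  "instr list \<Rightarrow> ('k \<Rightarrow> nat) \<Rightarrow> ('k \<Rightarrow> real) \<Rightarrow> (nat \<Rightarrow> nat \<Rightarrow> real) \<Rightarrow> 'k set \<Rightarrow> bool" where
  "program_computes P loc v S D \<longleftrightarrow>
     prog_ok P S \<and> (\<forall>k\<in>D. loc k < length P \<and> eval_prog P S ! loc k = v k)"

lemma program_computes_append:
  "program_computes P loc v S D \<Longrightarrow> prog_ok (P @ Q) S \<Longrightarrow> program_computes (P @ Q) loc v S D"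
  unfolding program_computes_def by (auto simp: eval_prog_append_nth)

lemma compile_expr_correct:
  assumes "program_computes P loc v S (expr_refs e)" and "expr_defined v S e"
  defines "ce \<equiv> compile_expr loc (length P) e"
  shows "prog_ok (P @ fst ce) S \<and> snd ce < length P + length (fst ce) \<and>
         eval_prog (P @ fst ce) S ! snd ce = eval_expr v S e"
  using assms(1,2) unfolding ce_def
proof (induction e arbitrary: P)
  case (ERef k)
  then show ?case by (simp add: program_computes_def)
next
  case (EBin f e1 e2)
  obtain c1 r1 where ce1: "compile_expr loc (length P) e1 = (c1, r1)" by fastforce
  obtain c2 r2 where ce2: "compile_expr loc (length (P @ c1)) e2 = (c2, r2)" by fastforce
  have IH1: "prog_ok (P @ c1) S \<and> r1 < length P + length c1 \<and>
      eval_prog (P @ c1) S ! r1 = eval_expr v S e1"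
    using EBin.IH(1)[of P] EBin.prems ce1 by (auto simp: program_computes_def)
  moreover have "program_computes P loc v S (expr_refs e2)"
    using EBin.prems(1) by (simp add: program_computes_def)
  ultimately have "program_computes (P @ c1) loc v S (expr_refs e2)"
    by (simp add: program_computes_append)
  then have IH2: "prog_ok (P @ c1 @ c2) S \<and> r2 < length P + length c1 + length c2 \<and>
      eval_prog (P @ c1 @ c2) S ! r2 = eval_expr v S e2"
    using EBin.IH(2)[of "P @ c1"] EBin.prems(2) ce2 by auto
  have r1: "eval_prog (P @ c1 @ c2) S ! r1 = eval_expr v S e1"
    using IH1 eval_prog_append_nth[of r1 "P @ c1" c2 S] by simp
  have "instr_ok (eval_prog (P @ c1 @ c2) S) (binop_instr f r1 r2)"
    using IH1 IH2 r1 EBin.prems(2) by (cases f) auto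
  moreover have "step S (eval_prog (P @ c1 @ c2) S) (binop_instr f r1 r2) =
      binop_val f (eval_expr v S e1) (eval_expr v S e2)"
    using IH2 r1 by (cases f) auto
  ultimately show ?case
    using ce1 ce2 IH2 prog_ok_snoc[of "P @ c1 @ c2"] eval_prog_snoc[of "P @ c1 @ c2"]
    by (simp add: nth_append)
next
  case (ESqrt e)
  obtain c r where ce: "compile_expr loc (length P) e = (c, r)" by fastforce
  have "prog_ok (P @ c) S \<and> r < length P + length c \<and> eval_prog (P @ c) S ! r = eval_expr v S e"
    using ESqrt.IH[of P] ESqrt.prems ce by auto
  then show ?case
    using ce ESqrt.prems(2) prog_ok_snoc[of "P @ c"] eval_prog_snoc[of "P @ c"]
    by (simp add: nth_append)
qed (auto simp: prog_ok_snoc eval_prog_snoc nth_append program_computes_def)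

definition emit :: "('k \<Rightarrow> 'k expr) \<Rightarrow> instr list \<times> ('k \<Rightarrow> nat) \<Rightarrow> 'k \<Rightarrow> instr list \<times> ('k \<Rightarrow> nat)" where
  "emit ex = (\<lambda>(P, loc) k.
     let (c, res) = compile_expr loc (length P) (ex k) in (P @ c, loc(k := res)))"

lemma length_emit: "length (fst (emit ex st k)) = length (fst st) + expr_size (ex k)"
  using length_compile_expr[of "snd st" "length (fst st)" "ex k"]
  by (auto simp: emit_def split: prod.splits)

lemma emit_computes:
  assumes "program_computes P loc v S D" and "expr_refs (ex k) \<subseteq> D"
    and "expr_defined v S (ex k)" and "eval_expr v S (ex k) = v k"
  shows "case_prod program_computes (emit ex (P, loc) k) v S (insert k D)"
proof -
  obtain c res where ce: "compile_expr loc (length P) (ex k) = (c, res)" by fastforce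
  have "program_computes P loc v S (expr_refs (ex k))"
    using assms(1,2) by (auto simp: program_computes_def)
  then have "prog_ok (P @ c) S \<and> res < length P + length c \<and> eval_prog (P @ c) S ! res = v k"
    using compile_expr_correct[of P loc v S "ex k"] assms(3,4) ce by simp
  with assms(1) show ?thesis
    by (auto simp: emit_def ce program_computes_def eval_prog_append_nth)
qed

lemma foldl_emit_computes:
  assumes "case_prod program_computes st v S D"
    and "\<And>p. p < length ks \<Longrightarrow> expr_refs (ex (ks ! p)) \<subseteq> D \<union> set (take p ks) \<and>
           expr_defined v S (ex (ks ! p)) \<and> eval_expr v S (ex (ks ! p)) = v (ks ! p)"
  shows "case_prod program_computes (foldl (emit ex) st ks) v S (D \<union> set ks)"
  using assms
proof (induction ks arbitrary: st D)
  case (Cons k ks)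
  have "case_prod program_computes (emit ex st k) v S (insert k D)"
    using Cons.prems emit_computes[of "fst st" "snd st" v S D ex k] by (force simp: split_beta)
  moreover have "expr_refs (ex (ks ! p)) \<subseteq> insert k D \<union> set (take p ks) \<and>
      expr_defined v S (ex (ks ! p)) \<and> eval_expr v S (ex (ks ! p)) = v (ks ! p)"
    if "p < length ks" for p
    using Cons.prems(2)[of "Suc p"] that by auto
  ultimately show ?case
    using Cons.IH[of "emit ex st k" "insert k D"] by simp
qed simp

lemma length_foldl_emit:
  "length (fst (foldl (emit ex) st ks)) = length (fst st) + (\<Sum>k\<leftarrow>ks. expr_size (ex k))"
  by (induction ks arbitrary: st) (auto simp: length_emit)

lemma ranked_system_program:
  fixes ex :: "'k \<Rightarrow> 'k expr" and rank :: "'k \<Rightarrow> nat"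
  assumes "finite U"
    and refs: "\<And>k. k \<in> U \<Longrightarrow> expr_refs (ex k) \<subseteq> {k' \<in> U. rank k' < rank k}"
    and eqs: "\<And>S k. Q S \<Longrightarrow> k \<in> U \<Longrightarrow>
       expr_defined (v S) S (ex k) \<and> eval_expr (v S) S (ex k) = v S k"
  obtains P loc where "length P = (\<Sum>k\<in>U. expr_size (ex k))"
    and "\<And>S. Q S \<Longrightarrow> program_computes P loc (v S) S U"
proof -
  obtain xs where xs: "set xs = U" "distinct xs" using finite_distinct_list[OF \<open>finite U\<close>] by blast
  define ks where "ks = sort_key rank xs"
  have ks: "set ks = U" "distinct ks" "sorted (map rank ks)" using xs by (simp_all add: ks_def)
  have earlier: "expr_refs (ex (ks ! p)) \<subseteq> set (take p ks)" if p: "p < length ks" for p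
  proof
    fix k' assume "k' \<in> expr_refs (ex (ks ! p))"
    then have "k' \<in> set ks" and less: "rank k' < rank (ks ! p)"
      using refs[of "ks ! p"] ks(1) p by auto
    then obtain q where q: "q < length ks" "k' = ks ! q" by (auto simp: in_set_conv_nth)
    have "q < p"
      using sorted_nth_mono[OF ks(3), of p q] less p q by (cases "p \<le> q") auto
    then show "k' \<in> set (take p ks)" using q by (auto simp: in_set_conv_nth)
  qed
  let ?st = "foldl (emit ex) ([], \<lambda>_. 0) ks"
  show thesis
  proof
    show "length (fst ?st) = (\<Sum>k\<in>U. expr_size (ex k))"
      using ks by (simp add: length_foldl_emit sum_list_distinct_conv_sum_set)
    show "program_computes (fst ?st) (snd ?st) (v S) S U" if "Q S" for S
      using foldl_emit_computes[of "([], \<lambda>_. 0)" "v S" S "{}" ks ex] earlier eqs[OF that] ks(1)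
      by (auto simp: program_computes_def prog_ok_def split_beta)
  qed
qed

section \<open>Inverses of triangular and Cholesky-factored matrices\<close>

definition right_inverse :: "nat \<Rightarrow> (nat \<Rightarrow> nat \<Rightarrow> real) \<Rightarrow> (nat \<Rightarrow> nat \<Rightarrow> real) \<Rightarrow> bool" where
  "right_inverse r A X \<longleftrightarrow> (\<forall>i<r. \<forall>j<r. (\<Sum>k<r. A i k * X k j) = (if i = j then 1 else 0))"

lemma mat_inv_altdef: "mat_inv r A = (SOME X. right_inverse r A X)"
  unfolding mat_inv_def right_inverse_def ..

lemma right_inverse_mat_inv: "right_inverse r A X \<Longrightarrow> right_inverse r A (mat_inv r A)"
  unfolding mat_inv_altdef by (rule someI[of "right_inverse r A"])

lemma mat_inv_cong: "(\<And>i k. i < r \<Longrightarrow> k < r \<Longrightarrow> A i k = B i k) \<Longrightarrow> mat_inv r A = mat_inv r B"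
  unfolding mat_inv_def by (rule arg_cong[where f = Eps]) (auto intro!: ext sum.cong)

lemma left_inverse_eq_right_inverse:
  assumes X: "right_inverse r A X" and Y: "right_inverse r Y A" and "i < r" "j < r"
  shows "Y i j = X i j"
proof -
  have "(\<Sum>l<r. (\<Sum>k<r. Y i k * A k l) * X l j) = (\<Sum>l<r. (if i = l then 1 else 0) * X l j)"
    using Y \<open>i < r\<close> by (auto simp: right_inverse_def intro!: sum.cong)
  also have "\<dots> = X i j"
    using \<open>i < r\<close> by (simp add: if_distrib[where f = "\<lambda>c. c * _"] cong: if_cong)
  finally have "X i j = (\<Sum>l<r. (\<Sum>k<r. Y i k * A k l) * X l j)" by simp
  also have "\<dots> = (\<Sum>k<r. \<Sum>l<r. Y i k * A k l * X l j)"
    by (subst sum.swap) (simp add: sum_distrib_right)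
  also have "\<dots> = (\<Sum>k<r. Y i k * (\<Sum>l<r. A k l * X l j))"
    by (simp add: sum_distrib_left mult.assoc)
  also have "\<dots> = (\<Sum>k<r. Y i k * (if k = j then 1 else 0))"
    using X \<open>j < r\<close> by (auto simp: right_inverse_def intro!: sum.cong)
  also have "\<dots> = Y i j"
    using \<open>j < r\<close> by (simp add: if_distrib[where f = "\<lambda>c. _ * c"] cong: if_cong)
  finally show ?thesis by simp
qed

lemma mat_inv_eqI:
  assumes "right_inverse r A Z" "right_inverse r Z A" "i < r" "j < r"
  shows "mat_inv r A i j = Z i j"
  using left_inverse_eq_right_inverse[OF right_inverse_mat_inv[OF assms(1)] assms(2-4)] by simp

lemma sum_lessThan_vanishing_above:
  fixes x :: "nat \<Rightarrow> 'a::comm_monoid_add"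
  assumes "j < r" and "\<And>k. j < k \<Longrightarrow> k < r \<Longrightarrow> x k = 0"
  shows "(\<Sum>k<r. x k) = (\<Sum>k<j. x k) + x j"
proof -
  have "(\<Sum>k<r. x k) = (\<Sum>k\<in>{..j}. x k)"
    using assms by (intro sum.mono_neutral_right) auto
  then show ?thesis by (simp add: lessThan_Suc_atMost[symmetric])
qed

definition lower_triangular :: "nat \<Rightarrow> (nat \<Rightarrow> nat \<Rightarrow> real) \<Rightarrow> bool" where
  "lower_triangular r L \<longleftrightarrow> (\<forall>i<r. \<forall>k<r. i < k \<longrightarrow> L i k = 0) \<and> (\<forall>i<r. L i i \<noteq> 0)"

function lower_inv :: "(nat \<Rightarrow> nat \<Rightarrow> real) \<Rightarrow> nat \<Rightarrow> nat \<Rightarrow> real" where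
  "lower_inv L i j = ((if i = j then 1 else 0) - (\<Sum>k<i. L i k * lower_inv L k j)) / L i i"
  by pat_completeness auto
termination by (relation "measure (\<lambda>(L, i, j). i)") auto

declare lower_inv.simps [simp del]

lemma right_inverse_lower_inv:
  assumes "lower_triangular r L"
  shows "right_inverse r L (lower_inv L)"
  unfolding right_inverse_def
proof (intro allI impI)
  fix i j assume "i < r" "j < r"
  have "(\<Sum>k<r. L i k * lower_inv L k j) = (\<Sum>k<i. L i k * lower_inv L k j) + L i i * lower_inv L i j"
    using assms \<open>i < r\<close> by (intro sum_lessThan_vanishing_above) (auto simp: lower_triangular_def)
  also have "L i i * lower_inv L i j = (if i = j then 1 else 0) - (\<Sum>k<i. L i k * lower_inv L k j)"
    using assms \<open>i < r\<close> by (subst lower_inv.simps) (simp add: lower_triangular_def)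
  finally show "(\<Sum>k<r. L i k * lower_inv L k j) = (if i = j then 1 else 0)" by simp
qed

lemma lower_inv_above_diagonal: "i < j \<Longrightarrow> lower_inv L i j = 0"
proof (induction i rule: less_induct)
  case (less i)
  then show ?case by (subst lower_inv.simps) simp
qed

lemma lower_triangular_lower_inv:
  assumes "lower_triangular r L"
  shows "lower_triangular r (lower_inv L)"
proof -
  have "lower_inv L i i = 1 / L i i" for i
    by (subst lower_inv.simps) (simp add: lower_inv_above_diagonal)
  then show ?thesis
    using assms by (simp add: lower_triangular_def lower_inv_above_diagonal)
qed

lemma left_inverse_lower_inv:
  assumes "lower_triangular r L"
  shows "right_inverse r (lower_inv L) L"
proof -
  let ?T = "lower_inv L"
  have T: "right_inverse r ?T (lower_inv ?T)"
    by (rule right_inverse_lower_inv[OF lower_triangular_lower_inv[OF assms]])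
  have "L i j = lower_inv ?T i j" if "i < r" "j < r" for i j
    by (rule left_inverse_eq_right_inverse[OF T right_inverse_lower_inv[OF assms] that])
  with T show ?thesis
    by (simp add: right_inverse_def)
qed

lemma mat_inv_lower_triangular:
  "lower_triangular r L \<Longrightarrow> i < r \<Longrightarrow> j < r \<Longrightarrow> mat_inv r L i j = lower_inv L i j"
  by (rule mat_inv_eqI[OF right_inverse_lower_inv left_inverse_lower_inv])

lemma right_inverse_factored:
  assumes L: "lower_triangular r L" and A: "\<And>a x. a < r \<Longrightarrow> x < r \<Longrightarrow> A a x = (\<Sum>y<r. L a y * L x y)"
  shows "right_inverse r A (\<lambda>a b. \<Sum>k<r. lower_inv L k a * lower_inv L k b)"
  unfolding right_inverse_def
proof (intro allI impI)
  fix a b assume "a < r" "b < r"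
  let ?T = "lower_inv L"
  have TL: "(\<Sum>x<r. ?T k x * L x y) = (if k = y then 1 else 0)" if "k < r" "y < r" for k y
    using left_inverse_lower_inv[OF L] that by (simp add: right_inverse_def)
  have "(\<Sum>x<r. A a x * (\<Sum>k<r. ?T k x * ?T k b)) =
      (\<Sum>x<r. \<Sum>y<r. \<Sum>k<r. L a y * (?T k x * L x y) * ?T k b)"
    using \<open>a < r\<close> A by (simp add: sum_product mult_ac)
  also have "\<dots> = (\<Sum>y<r. \<Sum>k<r. \<Sum>x<r. L a y * (?T k x * L x y) * ?T k b)"
    by (subst sum.swap) (rule sum.cong[OF refl], rule sum.swap)
  also have "\<dots> = (\<Sum>y<r. \<Sum>k<r. L a y * (\<Sum>x<r. ?T k x * L x y) * ?T k b)"
    by (simp add: sum_distrib_left sum_distrib_right)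
  also have "\<dots> = (\<Sum>y<r. \<Sum>k<r. (if k = y then L a y * ?T k b else 0))"
    by (intro sum.cong) (auto simp: TL)
  also have "\<dots> = (\<Sum>y<r. L a y * ?T y b)"
    by simp
  also have "\<dots> = (if a = b then 1 else 0)"
    using right_inverse_lower_inv[OF L] \<open>a < r\<close> \<open>b < r\<close> by (simp add: right_inverse_def)
  finally show "(\<Sum>x<r. A a x * (\<Sum>k<r. ?T k x * ?T k b)) = (if a = b then 1 else 0)" .
qed

lemma mat_inv_factored:
  assumes L: "lower_triangular r L" and A: "\<And>a x. a < r \<Longrightarrow> x < r \<Longrightarrow> A a x = (\<Sum>y<r. L a y * L x y)"
    and "a < r" "b < r"
  shows "mat_inv r A a b = (\<Sum>k<r. lower_inv L k a * lower_inv L k b)"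
proof (rule mat_inv_eqI[OF right_inverse_factored[OF L A]])
  let ?Z = "\<lambda>a b. \<Sum>k<r. lower_inv L k a * lower_inv L k b"
  show "right_inverse r ?Z A"
    unfolding right_inverse_def
  proof (intro allI impI)
    fix a b assume "a < r" "b < r"
    then have "(\<Sum>x<r. ?Z a x * A x b) = (\<Sum>x<r. A b x * ?Z x a)"
      using A by (intro sum.cong) (auto simp: mult.commute)
    also have "\<dots> = (if b = a then 1 else 0)"
      using right_inverse_factored[OF L A] \<open>a < r\<close> \<open>b < r\<close> by (simp add: right_inverse_def)
    finally show "(\<Sum>x<r. ?Z a x * A x b) = (if a = b then 1 else 0)" by simp
  qed
qed (use assms in auto)

section \<open>The MRD as block Gram--Schmidt orthogonalisation\<close>

lemma mrd_V_eq_mrd_W: "mrd_V S K r l js s t = mrd_W S K r l js (knot K js s) t"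
proof (induction l arbitrary: t rule: less_induct)
  case (less l)
  show ?case
    by (subst mrd_V.simps, subst mrd_W.simps) (simp add: less)
qed

lemma mrd_W_take: "mrd_W S K r l js i t = mrd_W S K r l (take l js) i t"
proof (induction l arbitrary: js t rule: less_induct)
  case (less l)
  have "mrd_W S K r k (take l js) i a = mrd_W S K r k js i a" if "k < l" for k a
    using less.IH[OF that, of "take l js" a] less.IH[OF that, of js a] that by (simp add: min_def)
  then show ?case
    by (subst (1 2) mrd_W.simps) (auto intro!: sum.cong simp: min_def)
qed

lemma knot_mem: "finite (K c) \<Longrightarrow> t < card (K c) \<Longrightarrow> knot K c t \<in> K c"
  unfolding knot_def by (metis length_sorted_list_of_set nth_mem set_sorted_list_of_set)

lemma knot_eq_iff:
  "finite (K c) \<Longrightarrow> s < card (K c) \<Longrightarrow> t < card (K c) \<Longrightarrow> knot K c s = knot K c t \<longleftrightarrow> s = t"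
  unfolding knot_def
  by (metis distinct_sorted_list_of_set length_sorted_list_of_set nth_eq_iff_index_eq)

definition bform :: "nat \<Rightarrow> (nat \<Rightarrow> nat \<Rightarrow> real) \<Rightarrow> (nat \<Rightarrow> real) \<Rightarrow> (nat \<Rightarrow> real) \<Rightarrow> real" where
  "bform n S x y = (\<Sum>i<n. \<Sum>j<n. x i * S i j * y j)"

definition basis_vec :: "nat \<Rightarrow> nat \<Rightarrow> real" where
  "basis_vec i = (\<lambda>j. if j = i then 1 else 0)"

lemma bform_diff_left: "bform n S (\<lambda>j. x j - y j) z = bform n S x z - bform n S y z"
  by (simp add: bform_def algebra_simps sum_subtractf)

lemma bform_diff_right: "bform n S x (\<lambda>j. y j - z j) = bform n S x y - bform n S x z"
  by (simp add: bform_def algebra_simps sum_subtractf)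

lemma bform_sum_left: "bform n S (\<lambda>j. \<Sum>k\<in>A. x k j) y = (\<Sum>k\<in>A. bform n S (x k) y)"
  unfolding bform_def
  by (simp add: sum_distrib_right) (subst sum.swap, rule sum.cong[OF refl], rule sum.swap)

lemma bform_sum_right: "bform n S x (\<lambda>j. \<Sum>k\<in>A. y k j) = (\<Sum>k\<in>A. bform n S x (y k))"
  unfolding bform_def
  by (simp add: sum_distrib_left) (subst sum.swap, rule sum.cong[OF refl], rule sum.swap)

lemma bform_scale_left: "bform n S (\<lambda>j. c * x j) y = c * bform n S x y"
  by (simp add: bform_def sum_distrib_left algebra_simps)

lemma bform_scale_right: "bform n S x (\<lambda>j. c * y j) = c * bform n S x y"
  by (simp add: bform_def sum_distrib_left algebra_simps)

lemma bform_commute: "posdef n S \<Longrightarrow> bform n S x y = bform n S y x"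
  unfolding bform_def posdef_def by (subst sum.swap) (auto intro!: sum.cong)

lemma bform_basis_left:
  assumes "i < n"
  shows "bform n S (basis_vec i) y = (\<Sum>j<n. S i j * y j)"
proof -
  have "bform n S (basis_vec i) y = (\<Sum>i'<n. if i' = i then (\<Sum>j<n. S i j * y j) else 0)"
    unfolding bform_def basis_vec_def by (intro sum.cong) auto
  with assms show ?thesis by simp
qed

lemma bform_basis_basis: "i < n \<Longrightarrow> j < n \<Longrightarrow> bform n S (basis_vec i) (basis_vec j) = S i j"
  using bform_basis_left[of i n S "basis_vec j"]
  by (simp add: basis_vec_def if_distrib[where f = "\<lambda>c. _ * c"] cong: if_cong)

locale mrd_gram_schmidt =
  fixes n r :: nat and S :: "nat \<Rightarrow> nat \<Rightarrow> real" and K :: "nat list \<Rightarrow> nat set"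
    and N :: "nat list set"
  assumes posdef_S: "posdef n S"
    and take_closed: "c \<in> N \<Longrightarrow> take k c \<in> N"
    and knots_below: "c \<in> N \<Longrightarrow> K c \<subseteq> {..<n}"
    and card_knots: "c \<in> N \<Longrightarrow> card (K c) = r"
    and knots_disjoint_prefix: "c \<in> N \<Longrightarrow> k < length c \<Longrightarrow> K c \<inter> K (take k c) = {}"
    and posdef_invertible: "posdef r A \<Longrightarrow> right_inverse r A (mat_inv r A)"
      \<comment> \<open>trivial for \<open>r = 1\<close>; that case yields Cholesky factors, which give it for every \<open>r\<close>\<close>
begin

abbreviation V :: "nat list \<Rightarrow> nat \<Rightarrow> nat \<Rightarrow> real" where
  "V c \<equiv> mrd_V S K r (length c) c"

text \<open>\<open>gs_vec c t\<close> is the unit vector at the \<open>t\<close>-th knot of \<open>c\<close>, orthogonalised in the inner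
  product \<open>\<Sigma>\<close> against the knots of all proper ancestors of \<open>c\<close>.\<close>

function gs_vec :: "nat list \<Rightarrow> nat \<Rightarrow> nat \<Rightarrow> real" where
  "gs_vec c t j = basis_vec (knot K c t) j -
     (\<Sum>k<length c. \<Sum>a<r. \<Sum>b<r. mat_inv r (mrd_V S K r k (take k c)) a b *
        mrd_V S K r k c t b * gs_vec (take k c) a j)"
  by pat_completeness auto
termination by (relation "measure (\<lambda>(c, t, j). length c)") auto

declare gs_vec.simps [simp del]

lemma gs_vec_eq: "gs_vec c t = (\<lambda>j. basis_vec (knot K c t) j -
     (\<Sum>k<length c. \<Sum>a<r. \<Sum>b<r. mat_inv r (mrd_V S K r k (take k c)) a b *
        mrd_V S K r k c t b * gs_vec (take k c) a j))"
  by (rule ext, subst gs_vec.simps, rule refl)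

lemma knot_mem_node: "c \<in> N \<Longrightarrow> t < r \<Longrightarrow> knot K c t \<in> K c"
  using knot_mem[of K c t] knots_below[of c] card_knots[of c] finite_subset by fastforce

lemma knot_below: "c \<in> N \<Longrightarrow> t < r \<Longrightarrow> knot K c t < n"
  using knot_mem_node knots_below by blast

lemma mrd_W_gs_vec:
  assumes "c \<in> N" "i < n" "t < r"
  shows "mrd_W S K r (length c) c i t = bform n S (basis_vec i) (gs_vec c t)"
  using assms(1,3)
proof (induction "length c" arbitrary: c t rule: less_induct)
  case less
  have IH: "mrd_W S K r k c i a = bform n S (basis_vec i) (gs_vec (take k c) a)"
    if "k < length c" "a < r" for k a
    using less.hyps[of "take k c" a] less.prems that take_closed mrd_W_take[of S K r k c]
    by (simp add: min_def)
  have "bform n S (basis_vec i) (gs_vec c t) = S i (knot K c t) -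
     (\<Sum>k<length c. \<Sum>a<r. \<Sum>b<r. mat_inv r (mrd_V S K r k (take k c)) a b *
        mrd_V S K r k c t b * bform n S (basis_vec i) (gs_vec (take k c) a))"
    by (subst gs_vec_eq) (simp only: bform_diff_right bform_sum_right bform_scale_right
        bform_basis_basis[OF \<open>i < n\<close> knot_below[OF less.prems]])
  also have "\<dots> = mrd_W S K r (length c) c i t"
    by (subst mrd_W.simps) (auto intro!: sum.cong simp: IH)
  finally show ?case by simp
qed

lemma mrd_V_gs_vec:
  assumes "c \<in> N" "k \<le> length c" "s < r" "t < r"
  shows "mrd_V S K r k c s t = bform n S (basis_vec (knot K c s)) (gs_vec (take k c) t)"
proof -
  have "mrd_V S K r k c s t = mrd_W S K r k (take k c) (knot K c s) t"
    by (simp add: mrd_V_eq_mrd_W mrd_W_take[of S K r k c])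
  also have "\<dots> = bform n S (basis_vec (knot K c s)) (gs_vec (take k c) t)"
    using mrd_W_gs_vec[of "take k c" "knot K c s" t] assms take_closed knot_below
    by (simp add: min_absorb2)
  finally show ?thesis .
qed

lemma gs_vec_vanishes:
  assumes "c \<in> N" "t < r" "\<And>k. k \<le> length c \<Longrightarrow> j \<notin> K (take k c)"
  shows "gs_vec c t j = 0"
  using assms
proof (induction "length c" arbitrary: c t rule: less_induct)
  case less
  have "basis_vec (knot K c t) j = 0"
    using knot_mem_node[OF less.prems(1,2)] less.prems(3)[of "length c"]
    by (auto simp: basis_vec_def)
  moreover have "gs_vec (take k c) a j = 0" if k: "k < length c" and "a < r" for k a
  proof (rule less.hyps)
    show "length (take k c) < length c" "take k c \<in> N" "a < r"
      using k \<open>a < r\<close> take_closed[OF less.prems(1)] by auto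
    show "j \<notin> K (take k' (take k c))" if "k' \<le> length (take k c)" for k'
      using less.prems(3)[of k'] that k by (simp add: min_def)
  qed
  ultimately show ?case by (subst gs_vec.simps) simp
qed

lemma gs_vec_at_knot:
  assumes "c \<in> N" "s < r" "s' < r"
  shows "gs_vec c s (knot K c s') = (if s = s' then 1 else 0)"
proof -
  have "gs_vec (take k c) a (knot K c s') = 0" if k: "k < length c" and "a < r" for k a
  proof (rule gs_vec_vanishes)
    show "take k c \<in> N" by (rule take_closed[OF assms(1)])
    show "knot K c s' \<notin> K (take k' (take k c))" if "k' \<le> length (take k c)" for k'
      using knots_disjoint_prefix[OF assms(1), of k'] knot_mem_node[OF assms(1,3)] that k by auto
  qed fact
  moreover have "knot K c s' = knot K c s \<longleftrightarrow> s = s'"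
    using knot_eq_iff[of K c s' s] assms card_knots[OF assms(1)] knots_below[OF assms(1)]
    by (metis finite_lessThan finite_subset)
  ultimately show ?thesis
    by (subst gs_vec.simps) (simp add: basis_vec_def)
qed

lemma gs_vec_orthogonal:
  assumes c: "c \<in> N" and k: "k < length c" and "a < r" "t < r"
    and orth: "\<And>k' k'' a' t'. k'' < k' \<Longrightarrow> k' < length c \<Longrightarrow> a' < r \<Longrightarrow> t' < r \<Longrightarrow>
       bform n S (gs_vec (take k'' c) a') (gs_vec (take k' c) t') = 0"
    and gram: "\<And>k' s' t'. k' < length c \<Longrightarrow> s' < r \<Longrightarrow> t' < r \<Longrightarrow>
       bform n S (gs_vec (take k' c) s') (gs_vec (take k' c) t') = V (take k' c) s' t'"
    and posdef: "\<And>k'. k' < length c \<Longrightarrow> posdef r (V (take k' c))"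
  shows "bform n S (gs_vec (take k c) a) (gs_vec c t) = 0"
proof -
  define d where "d = take k c"
  define X where "X = mat_inv r (mrd_V S K r k d)"
  have len_d: "length d = k" using k by (simp add: d_def)
  have V_d: "V d = mrd_V S K r k d" using len_d by simp
  have "posdef r (mrd_V S K r k d)" using posdef[OF k] V_d by (simp add: d_def)
  then have inv: "right_inverse r (mrd_V S K r k d) X" unfolding X_def by (rule posdef_invertible)
  have XV: "(\<Sum>a'<r. V d a a' * X a' b) = (if a = b then 1 else 0)" if "b < r" for b
    using inv \<open>a < r\<close> that V_d by (simp add: right_inverse_def)
  have other: "bform n S (gs_vec d a) (gs_vec (take k' c) a') = 0"
    if "k' < length c" "k' \<noteq> k" "a' < r" for k' a'
  proof (cases "k' < k")
    case True
    then show ?thesis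
      using orth[of k' k a' a] k \<open>a < r\<close> that bform_commute[OF posdef_S] by (simp add: d_def)
  next
    case False
    then show ?thesis
      using orth[of k k' a a'] \<open>a < r\<close> that by (simp add: d_def)
  qed
  have "bform n S (gs_vec d a) (gs_vec c t) = bform n S (gs_vec d a) (basis_vec (knot K c t)) -
     (\<Sum>k'<length c. \<Sum>a'<r. \<Sum>b<r. mat_inv r (mrd_V S K r k' (take k' c)) a' b *
        mrd_V S K r k' c t b * bform n S (gs_vec d a) (gs_vec (take k' c) a'))"
    by (subst (2) gs_vec_eq) (simp only: bform_diff_right bform_sum_right bform_scale_right)
  also have "(\<Sum>k'<length c. \<Sum>a'<r. \<Sum>b<r. mat_inv r (mrd_V S K r k' (take k' c)) a' b *
        mrd_V S K r k' c t b * bform n S (gs_vec d a) (gs_vec (take k' c) a')) =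
      (\<Sum>a'<r. \<Sum>b<r. X a' b * mrd_V S K r k c t b * V d a a')"
    using k gram[OF k \<open>a < r\<close>] other
    by (subst sum.mono_neutral_right[of "{..<length c}" "{k}"]) (auto simp: X_def d_def)
  also have "\<dots> = (\<Sum>b<r. mrd_V S K r k c t b * (\<Sum>a'<r. V d a a' * X a' b))"
    by (subst sum.swap) (simp add: sum_distrib_left mult_ac)
  also have "\<dots> = mrd_V S K r k c t a"
    using \<open>a < r\<close> by (simp add: XV if_distrib[where f = "\<lambda>x. _ * x"] cong: if_cong)
  also have "bform n S (gs_vec d a) (basis_vec (knot K c t)) = mrd_V S K r k c t a"
    using mrd_V_gs_vec[OF c _ \<open>t < r\<close> \<open>a < r\<close>, of k] k bform_commute[OF posdef_S]
    by (simp add: d_def)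
  finally show ?thesis by (simp add: d_def)
qed

lemma gs_vec_gram:
  assumes c: "c \<in> N" and "s < r" "t < r"
    and orth: "\<And>k a. k < length c \<Longrightarrow> a < r \<Longrightarrow> bform n S (gs_vec (take k c) a) (gs_vec c t) = 0"
  shows "bform n S (gs_vec c s) (gs_vec c t) = V c s t"
proof -
  have "bform n S (gs_vec c s) (gs_vec c t) = bform n S (basis_vec (knot K c s)) (gs_vec c t) -
     (\<Sum>k<length c. \<Sum>a<r. \<Sum>b<r. mat_inv r (mrd_V S K r k (take k c)) a b *
        mrd_V S K r k c s b * bform n S (gs_vec (take k c) a) (gs_vec c t))"
    by (subst (1) gs_vec_eq) (simp only: bform_diff_left bform_sum_left bform_scale_left)
  also have "\<dots> = bform n S (basis_vec (knot K c s)) (gs_vec c t)"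
    by (simp add: orth)
  also have "\<dots> = V c s t"
    using mrd_V_gs_vec[OF c order_refl \<open>s < r\<close> \<open>t < r\<close>] by simp
  finally show ?thesis .
qed

lemma posdef_V_gram:
  assumes c: "c \<in> N"
    and gram: "\<And>s t. s < r \<Longrightarrow> t < r \<Longrightarrow> bform n S (gs_vec c s) (gs_vec c t) = V c s t"
  shows "posdef r (V c)"
  unfolding posdef_def
proof (intro conjI allI impI)
  fix s t assume "s < r" "t < r"
  then show "V c s t = V c t s"
    using gram[of s t] gram[of t s] bform_commute[OF posdef_S] by metis
next
  fix x :: "nat \<Rightarrow> real" assume "\<exists>s<r. x s \<noteq> 0"
  then obtain s0 where s0: "s0 < r" "x s0 \<noteq> 0" by blast
  define y where "y = (\<lambda>j. \<Sum>s<r. x s * gs_vec c s j)"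
  have "y (knot K c s0) = x s0"
    using s0(1) gs_vec_at_knot[OF c _ s0(1)]
    by (simp add: y_def if_distrib[where f = "\<lambda>v. _ * v"] cong: if_cong)
  then have "\<exists>i<n. y i \<noteq> 0" using knot_below[OF c s0(1)] s0(2) by auto
  then have "0 < bform n S y y" using posdef_S by (simp add: posdef_def bform_def)
  also have "bform n S y y = (\<Sum>s<r. \<Sum>t<r. x s * x t * bform n S (gs_vec c s) (gs_vec c t))"
    unfolding y_def by (simp only: bform_sum_left bform_sum_right bform_scale_left bform_scale_right
        sum_distrib_left mult.assoc)
  also have "\<dots> = (\<Sum>s<r. \<Sum>t<r. x s * V c s t * x t)"
    by (auto intro!: sum.cong simp: gram)
  finally show "0 < (\<Sum>s<r. \<Sum>t<r. x s * V c s t * x t)" .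
qed

lemma gs_vec_orth_gram_posdef:
  assumes "c \<in> N"
  shows "(\<forall>k<length c. \<forall>a<r. \<forall>t<r. bform n S (gs_vec (take k c) a) (gs_vec c t) = 0) \<and>
    (\<forall>s<r. \<forall>t<r. bform n S (gs_vec c s) (gs_vec c t) = V c s t) \<and> posdef r (V c)"
  using assms
proof (induction "length c" arbitrary: c rule: less_induct)
  case less
  note c = \<open>c \<in> N\<close>
  have IH: "(\<forall>k''<k'. \<forall>a<r. \<forall>t<r. bform n S (gs_vec (take k'' c) a) (gs_vec (take k' c) t) = 0) \<and>
      (\<forall>s<r. \<forall>t<r. bform n S (gs_vec (take k' c) s) (gs_vec (take k' c) t) = V (take k' c) s t) \<and>
      posdef r (V (take k' c))" if "k' < length c" for k'
    using less.hyps[of "take k' c"] take_closed[OF c, of k'] that by (simp add: min_def)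
  have orth: "\<forall>k<length c. \<forall>a<r. \<forall>t<r. bform n S (gs_vec (take k c) a) (gs_vec c t) = 0"
    using gs_vec_orthogonal[OF c] IH by blast
  then have gram: "\<forall>s<r. \<forall>t<r. bform n S (gs_vec c s) (gs_vec c t) = V c s t"
    using gs_vec_gram[OF c] by blast
  with orth posdef_V_gram[OF c] show ?case by blast
qed

corollary posdef_mrd_V: "c \<in> N \<Longrightarrow> posdef r (mrd_V S K r (length c) c)"
  using gs_vec_orth_gram_posdef by blast

end

section \<open>Cholesky factorisation of positive definite matrices\<close>

definition is_cholesky :: "nat \<Rightarrow> (nat \<Rightarrow> nat \<Rightarrow> real) \<Rightarrow> (nat \<Rightarrow> nat \<Rightarrow> real) \<Rightarrow> bool" where
  "is_cholesky r A L \<longleftrightarrow> (\<forall>i<r. \<forall>j<r. i < j \<longrightarrow> L i j = 0) \<and> (\<forall>i<r. L i i > 0) \<and>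
     (\<forall>i<r. \<forall>j<r. (\<Sum>k<r. L i k * L j k) = A i j)"

lemma chol_altdef: "chol r A = (SOME L. is_cholesky r A L)"
  unfolding chol_def is_cholesky_def ..

lemma is_cholesky_chol: "is_cholesky r A L \<Longrightarrow> is_cholesky r A (chol r A)"
  unfolding chol_altdef by (rule someI[of "is_cholesky r A"])

lemma lower_triangular_cholesky: "is_cholesky r A L \<Longrightarrow> lower_triangular r L"
  unfolding is_cholesky_def lower_triangular_def by force

lemma cholesky_product_split:
  assumes "is_cholesky r A L" "i < r" "j < r"
  shows "A i j = (\<Sum>k<j. L i k * L j k) + L i j * L j j"
proof -
  have "(\<Sum>k<r. L i k * L j k) = (\<Sum>k<j. L i k * L j k) + L i j * L j j"
    using assms by (intro sum_lessThan_vanishing_above) (auto simp: is_cholesky_def)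
  with assms show ?thesis by (simp add: is_cholesky_def)
qed

lemma cholesky_unique:
  assumes L1: "is_cholesky r A L1" and L2: "is_cholesky r A L2" and "j < r"
  shows "\<forall>i<r. L1 i j = L2 i j"
  using \<open>j < r\<close>
proof (induction j rule: less_induct)
  case (less j)
  have prev: "(\<Sum>k<j. L1 i k * L1 j k) = (\<Sum>k<j. L2 i k * L2 j k)" if "i < r" for i
    using less that by (auto intro!: sum.cong)
  have col: "L1 i j * L1 j j = L2 i j * L2 j j" if "i < r" for i
    using cholesky_product_split[OF L1 that less.prems] cholesky_product_split[OF L2 that less.prems]
      prev[OF that] by simp
  have pos: "L1 j j > 0" "L2 j j > 0" using L1 L2 less.prems by (auto simp: is_cholesky_def)
  have "L1 j j = L2 j j"
    using col[OF less.prems] pos power2_eq_imp_eq[of "L1 j j" "L2 j j"]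
    by (simp add: power2_eq_square)
  with col pos show ?case by auto
qed

text \<open>Columns of the \<open>L D L\<^sup>T\<close> factorisation, computed without square roots: the \<open>j\<close>-th pivot
  is \<open>ldl_col A j j\<close>.\<close>

function ldl_col :: "(nat \<Rightarrow> nat \<Rightarrow> real) \<Rightarrow> nat \<Rightarrow> nat \<Rightarrow> real" where
  "ldl_col A j i = A i j - (\<Sum>k<j. ldl_col A k i * ldl_col A k j / ldl_col A k k)"
  by pat_completeness auto
termination by (relation "measure (\<lambda>(A, j, i). j)") auto

declare ldl_col.simps [simp del]

definition chol_factor :: "(nat \<Rightarrow> nat \<Rightarrow> real) \<Rightarrow> nat \<Rightarrow> nat \<Rightarrow> real" where
  "chol_factor A i j = (if j \<le> i then ldl_col A j i / sqrt (ldl_col A j j) else 0)"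

lemma posdef_1_invertible: "posdef 1 A \<Longrightarrow> right_inverse 1 A (mat_inv 1 A)"
proof -
  assume "posdef 1 A"
  then have "A 0 0 > 0" unfolding posdef_def by (elim conjE allE[of _ "\<lambda>_. 1"]) auto
  then have "right_inverse 1 A (\<lambda>_ _. 1 / A 0 0)" by (simp add: right_inverse_def)
  then show ?thesis by (rule right_inverse_mat_inv)
qed

text \<open>With one knot per node the MRD performs Gaussian elimination, so the Gram--Schmidt
  argument yields positivity of the pivots.\<close>

lemma mrd_gram_schmidt_singleton_knots:
  "posdef m A \<Longrightarrow> mrd_gram_schmidt m 1 A (\<lambda>c. {length c}) {c. length c < m}"
  by unfold_locales (use posdef_1_invertible in auto)

lemma singleton_knots_pivot_pos:
  assumes "posdef m A" "k < m"
  shows "mrd_V A (\<lambda>c. {length c}) 1 k (replicate k 0) 0 0 > 0"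
proof -
  have "posdef 1 (mrd_V A (\<lambda>c. {length c}) 1 k (replicate k 0))"
    using mrd_gram_schmidt.posdef_mrd_V[OF mrd_gram_schmidt_singleton_knots[OF assms(1)],
        of "replicate k 0"] assms(2)
    by simp
  then show ?thesis unfolding posdef_def by (elim conjE allE[of _ "\<lambda>_. 1"]) auto
qed

lemma ldl_col_eq_mrd_V:
  assumes A: "posdef m A" and "j \<le> i" "i < m"
  shows "ldl_col A j i = mrd_V A (\<lambda>c. {length c}) 1 j (replicate i 0) 0 0"
  using assms(2,3)
proof (induction j arbitrary: i rule: less_induct)
  case (less j)
  let ?V = "\<lambda>k c. mrd_V A (\<lambda>c. {length c}) 1 k c 0 0"
  have inv: "mat_inv 1 (mrd_V A (\<lambda>c. {length c}) 1 k (replicate k 0)) 0 0 =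
      1 / ?V k (replicate k 0)" if "k < m" for k
    using mat_inv_eqI[of 1 "mrd_V A (\<lambda>c. {length c}) 1 k (replicate k 0)"
        "\<lambda>_ _. 1 / ?V k (replicate k 0)"]
      singleton_knots_pivot_pos[OF A that] by (simp add: right_inverse_def)
  have "?V j (replicate i 0) = A i j -
      (\<Sum>k<j. ?V k (replicate i 0) * (1 / ?V k (replicate k 0)) * ?V k (replicate j 0))"
    using less.prems inv by (subst mrd_V.simps) (simp add: knot_def min_def)
  also have "\<dots> = ldl_col A j i"
    using less.IH less.prems by (subst ldl_col.simps) (auto intro!: sum.cong)
  finally show ?case by simp
qed

lemma ldl_col_pos: "posdef m A \<Longrightarrow> j < m \<Longrightarrow> ldl_col A j j > 0"
  using ldl_col_eq_mrd_V[of m A j j] singleton_knots_pivot_pos[of m A j] by simp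

lemma is_cholesky_chol_factor:
  assumes A: "posdef m A"
  shows "is_cholesky m A (chol_factor A)"
proof -
  let ?L = "chol_factor A" and ?G = "ldl_col A"
  have prod: "?L i k * ?L j k = ?G k i * ?G k j / ?G k k" if "k \<le> j" "j \<le> i" "i < m" for i j k
  proof -
    have "?G k k > 0" using ldl_col_pos[OF A, of k] that by simp
    then show ?thesis using that by (simp add: chol_factor_def)
  qed
  have lower: "(\<Sum>k<m. ?L i k * ?L j k) = A i j" if "j \<le> i" "i < m" for i j
  proof -
    have "(\<Sum>k<m. ?L i k * ?L j k) = (\<Sum>k<j. ?L i k * ?L j k) + ?L i j * ?L j j"
      using that by (intro sum_lessThan_vanishing_above) (auto simp: chol_factor_def)
    also have "\<dots> = (\<Sum>k<j. ?G k i * ?G k j / ?G k k) + ?G j i * ?G j j / ?G j j"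
      using that prod by simp
    also have "\<dots> = A i j"
      using ldl_col_pos[OF A, of j] that by (subst (3) ldl_col.simps) simp
    finally show ?thesis .
  qed
  show ?thesis
    unfolding is_cholesky_def
  proof (intro conjI allI impI)
    fix i j assume "i < m" "j < m"
    then show "(\<Sum>k<m. ?L i k * ?L j k) = A i j"
      using lower[of i j] lower[of j i] A by (cases "j \<le> i") (auto simp: posdef_def mult.commute)
  qed (use ldl_col_pos[OF A] in \<open>auto simp: chol_factor_def\<close>)
qed

lemma chol_eq_chol_factor: "posdef m A \<Longrightarrow> i < m \<Longrightarrow> j < m \<Longrightarrow> chol m A i j = chol_factor A i j"
  using cholesky_unique[OF is_cholesky_chol[OF is_cholesky_chol_factor] is_cholesky_chol_factor]
  by blast

lemma posdef_factored:
  "posdef m A \<Longrightarrow> a < m \<Longrightarrow> x < m \<Longrightarrow> A a x = (\<Sum>y<m. chol_factor A a y * chol_factor A x y)"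
  using is_cholesky_chol_factor by (simp add: is_cholesky_def)

lemma lower_triangular_chol_factor: "posdef m A \<Longrightarrow> lower_triangular m (chol_factor A)"
  by (rule lower_triangular_cholesky[OF is_cholesky_chol_factor])

lemma right_inverse_mat_inv_posdef: "posdef m A \<Longrightarrow> right_inverse m A (mat_inv m A)"
  by (rule right_inverse_mat_inv, rule right_inverse_factored[OF lower_triangular_chol_factor])
    (simp_all add: posdef_factored)

lemma mat_inv_posdef:
  "posdef m A \<Longrightarrow> a < m \<Longrightarrow> b < m \<Longrightarrow>
     mat_inv m A a b = (\<Sum>k<m. lower_inv (chol_factor A) k a * lower_inv (chol_factor A) k b)"
  by (rule mat_inv_factored[OF lower_triangular_chol_factor]) (simp_all add: posdef_factored)

lemma mat_inv_chol:
  assumes "posdef m A" "t < m" "a < m"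
  shows "mat_inv m (chol m A) t a = lower_inv (chol_factor A) t a"
proof -
  have "mat_inv m (chol m A) = mat_inv m (chol_factor A)"
    using chol_eq_chol_factor[OF assms(1)] by (intro mat_inv_cong) simp
  then show ?thesis
    using mat_inv_lower_triangular[OF lower_triangular_chol_factor[OF assms(1)] assms(2,3)] by simp
qed

section \<open>The MRD as a ranked system of equations\<close>

lemma mrd_B_eq_lower_inv:
  assumes "posdef r (mrd_V S K r (length c) c)" "t < r"
  shows "mrd_B S K r c i t =
    (\<Sum>a<r. mrd_W S K r (length c) c i a * lower_inv (chol_factor (mrd_V S K r (length c) c)) t a)"
  using mat_inv_chol[OF assms(1) assms(2)] assms(2) by (simp add: mrd_B_def mat_inv_sqrt_def)

text \<open>The recursion in the form \<open>W = \<Sigma> - \<Sigma>\<^sub>k B\<^sub>k B\<^sub>k\<^sup>T\<close> needs no inverse of a \<open>V\<close>, only the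
  Cholesky factors that \<open>B\<close> uses anyway.\<close>

lemma mrd_W_eq_minus_BBt:
  assumes posdef: "\<And>k. k < length c \<Longrightarrow> posdef r (mrd_V S K r k (take k c))"
  shows "mrd_W S K r (length c) c i t = S i (knot K c t) -
    (\<Sum>k<length c. \<Sum>q<r. mrd_B S K r (take k c) i q * mrd_B S K r (take k c) (knot K c t) q)"
proof -
  have term_eq: "(\<Sum>a<r. \<Sum>b<r. mrd_W S K r k c i a * mat_inv r (mrd_V S K r k (take k c)) a b *
        mrd_V S K r k c t b) =
      (\<Sum>q<r. mrd_B S K r (take k c) i q * mrd_B S K r (take k c) (knot K c t) q)"
    if k: "k < length c" for k
  proof -
    define d where "d = take k c"
    define T where "T = lower_inv (chol_factor (mrd_V S K r k d))"
    have len: "length d = k" using k by (simp add: d_def)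
    have W: "mrd_W S K r k c x a = mrd_W S K r (length d) d x a" for x a
      using mrd_W_take[of S K r k c] len by (simp add: d_def)
    have V: "mrd_V S K r k c t b = mrd_W S K r (length d) d (knot K c t) b" for b
      by (simp add: mrd_V_eq_mrd_W W)
    have X: "mat_inv r (mrd_V S K r k d) a b = (\<Sum>q<r. T q a * T q b)" if "a < r" "b < r" for a b
      using mat_inv_posdef[OF posdef[OF k] that] by (simp add: T_def d_def)
    have B: "mrd_B S K r d x q = (\<Sum>a<r. mrd_W S K r (length d) d x a * T q a)" if "q < r" for x q
      using mrd_B_eq_lower_inv[where c = d and t = q and i = x] posdef[OF k] that len
      by (simp add: T_def d_def)
    have "(\<Sum>a<r. \<Sum>b<r.
          mrd_W S K r k c i a * mat_inv r (mrd_V S K r k d) a b * mrd_V S K r k c t b) =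
        (\<Sum>a<r. \<Sum>b<r. \<Sum>q<r. mrd_W S K r (length d) d i a * T q a *
          (mrd_W S K r (length d) d (knot K c t) b * T q b))"
      by (intro sum.cong refl) (simp add: X W V sum_distrib_left sum_distrib_right mult_ac)
    also have "\<dots> = (\<Sum>a<r. \<Sum>q<r. \<Sum>b<r. mrd_W S K r (length d) d i a * T q a *
          (mrd_W S K r (length d) d (knot K c t) b * T q b))"
      by (rule sum.cong[OF refl], rule sum.swap)
    also have "\<dots> = (\<Sum>q<r. \<Sum>a<r. \<Sum>b<r. mrd_W S K r (length d) d i a * T q a *
          (mrd_W S K r (length d) d (knot K c t) b * T q b))"
      by (rule sum.swap)
    also have "\<dots> = (\<Sum>q<r. (\<Sum>a<r. mrd_W S K r (length d) d i a * T q a) *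
          (\<Sum>b<r. mrd_W S K r (length d) d (knot K c t) b * T q b))"
      by (simp add: sum_product)
    also have "\<dots> = (\<Sum>q<r. mrd_B S K r d i q * mrd_B S K r d (knot K c t) q)"
      by (simp add: B)
    finally show ?thesis unfolding d_def .
  qed
  show ?thesis
    by (subst mrd_W.simps) (simp add: term_eq)
qed

datatype mrd_key =
    W_entry "nat list" nat nat
  | B_entry "nat list" nat nat
  | Pivot "nat list" nat nat
  | Chol_entry "nat list" nat nat
  | Chol_inv_entry "nat list" nat nat

fun mrd_expr :: "(nat list \<Rightarrow> nat set) \<Rightarrow> nat \<Rightarrow> mrd_key \<Rightarrow> mrd_key expr" where
  "mrd_expr K r (W_entry c i t) =
     EBin Minus (EInp i (knot K c t))
       (esum (map (\<lambda>k. esum (map (\<lambda>q.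
          emul (B_entry (take k c) i q) (B_entry (take k c) (knot K c t) q)) [0..<r])) [0..<length c]))"
| "mrd_expr K r (B_entry c i t) =
     esum (map (\<lambda>a. emul (W_entry c i a) (Chol_inv_entry c t a)) [0..<r])"
| "mrd_expr K r (Pivot d j i) =
     EBin Minus (ERef (W_entry d (knot K d i) j))
       (esum (map (\<lambda>k. EBin Divide (emul (Pivot d k i) (Pivot d k j)) (ERef (Pivot d k k)))
          [0..<j]))"
| "mrd_expr K r (Chol_entry d i j) =
     (if j \<le> i then EBin Divide (ERef (Pivot d j i)) (ESqrt (ERef (Pivot d j j))) else EConst 0)"
| "mrd_expr K r (Chol_inv_entry d i j) =
     EBin Divide
       (EBin Minus (EConst (if i = j then 1 else 0))
          (esum (map (\<lambda>k. emul (Chol_entry d i k) (Chol_inv_entry d k j)) [0..<i])))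
       (ERef (Chol_entry d i i))"

fun mrd_value :: "(nat \<Rightarrow> nat \<Rightarrow> real) \<Rightarrow> (nat list \<Rightarrow> nat set) \<Rightarrow> nat \<Rightarrow> mrd_key \<Rightarrow> real" where
  "mrd_value S K r (W_entry c i t) = mrd_W S K r (length c) c i t"
| "mrd_value S K r (B_entry c i t) = mrd_B S K r c i t"
| "mrd_value S K r (Pivot d j i) = ldl_col (mrd_V S K r (length d) d) j i"
| "mrd_value S K r (Chol_entry d i j) = chol_factor (mrd_V S K r (length d) d) i j"
| "mrd_value S K r (Chol_inv_entry d i j) = lower_inv (chol_factor (mrd_V S K r (length d) d)) i j"

fun mrd_rank :: "nat \<Rightarrow> mrd_key \<Rightarrow> nat" where
  "mrd_rank r (W_entry c i t) = (2 * r + 3) * length c"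
| "mrd_rank r (Pivot d j i) = (2 * r + 3) * length d + 1 + j"
| "mrd_rank r (Chol_entry d i j) = (2 * r + 3) * length d + 1 + r"
| "mrd_rank r (Chol_inv_entry d i j) = (2 * r + 3) * length d + 2 + r + i"
| "mrd_rank r (B_entry c i t) = (2 * r + 3) * length c + 2 + 2 * r"

lemma rank_block_less:
  assumes "k < l" "x < 2 * r + 3"
  shows "(2 * r + 3) * k + x < (2 * r + 3) * (l::nat)"
proof -
  have "(2 * r + 3) * Suc k \<le> (2 * r + 3) * l" using assms(1) by (intro mult_le_mono2) simp
  with assms(2) show ?thesis by simp
qed

lemma tuples_length: "c \<in> tuples J m \<Longrightarrow> length c = m"
  by (simp add: tuples_def)

lemma finite_tuples: "finite (tuples J m)"
  using finite_lists_length_eq[of "{1..J}" m] unfolding tuples_def by (simp add: conj_commute)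

locale mrd_setting =
  fixes n J M r :: nat and I K :: "nat list \<Rightarrow> nat set"
  assumes mrd: "mrd_structure n J M r I K"
begin

lemma region_root: "I [] = {0..<n}"
  using mrd by (simp add: mrd_structure_def)

lemma knots_cover: "(\<Union>m\<le>M. \<Union>c\<in>tuples J m. K c) = {0..<n}"
  using mrd by (simp add: mrd_structure_def)

lemma region_split:
  assumes "m < M" "c \<in> tuples J m"
  shows "I c = (\<Union>j\<in>{1..J}. I (c @ [j]))"
    and "j \<in> {1..J} \<Longrightarrow> j' \<in> {1..J} \<Longrightarrow> j \<noteq> j' \<Longrightarrow> I (c @ [j]) \<inter> I (c @ [j']) = {}"
proof -
  have "\<forall>m<M. \<forall>c\<in>tuples J m. I c = (\<Union>j\<in>{1..J}. I (c @ [j])) \<and>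
      (\<forall>j\<in>{1..J}. \<forall>j'\<in>{1..J}. j \<noteq> j' \<longrightarrow> I (c @ [j]) \<inter> I (c @ [j']) = {})"
    using mrd unfolding mrd_structure_def by (elim conjE) assumption
  with assms show "I c = (\<Union>j\<in>{1..J}. I (c @ [j]))"
    and "j \<in> {1..J} \<Longrightarrow> j' \<in> {1..J} \<Longrightarrow> j \<noteq> j' \<Longrightarrow> I (c @ [j]) \<inter> I (c @ [j']) = {}"
    by blast+
qed

lemma knots_fresh:
  assumes "m \<le> M" "c \<in> tuples J m"
  shows "K c \<subseteq> I c - (\<Union>l<m. K (take l c))" and "card (K c) = r"
proof -
  have "\<forall>m\<le>M. \<forall>c\<in>tuples J m. K c \<subseteq> I c - (\<Union>l<m. K (take l c)) \<and> card (K c) = r"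
    using mrd unfolding mrd_structure_def by (elim conjE) assumption
  with assms show "K c \<subseteq> I c - (\<Union>l<m. K (take l c))" and "card (K c) = r"
    by blast+
qed

lemma knots_disjoint:
  assumes "m \<le> M" "m' \<le> M" "c \<in> tuples J m" "c' \<in> tuples J m'" "c \<noteq> c'"
  shows "K c \<inter> K c' = {}"
proof -
  have "\<forall>m\<le>M. \<forall>m'\<le>M. \<forall>c\<in>tuples J m. \<forall>c'\<in>tuples J m'. c \<noteq> c' \<longrightarrow> K c \<inter> K c' = {}"
    using mrd unfolding mrd_structure_def by (elim conjE) assumption
  with assms show ?thesis by blast
qed

definition nodes :: "nat list set" where
  "nodes = (\<Union>m\<le>M. tuples J m)"

lemma finite_nodes: "finite nodes"
  by (simp add: nodes_def finite_tuples)

lemma node_tuple: "c \<in> nodes \<Longrightarrow> c \<in> tuples J (length c) \<and> length c \<le> M"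
  by (auto simp: nodes_def tuples_def)

lemma take_node: "c \<in> nodes \<Longrightarrow> take k c \<in> nodes"
  by (auto simp: nodes_def tuples_def min_def dest: in_set_takeD)

lemma knots_region: "c \<in> nodes \<Longrightarrow> K c \<subseteq> I c"
  using knots_fresh node_tuple by blast

lemma knots_disjoint_prefix: "c \<in> nodes \<Longrightarrow> k < length c \<Longrightarrow> K c \<inter> K (take k c) = {}"
  using knots_fresh node_tuple by blast

lemma card_knots: "c \<in> nodes \<Longrightarrow> card (K c) = r"
  using knots_fresh(2) node_tuple by blast

lemma knots_below: "c \<in> nodes \<Longrightarrow> K c \<subseteq> {..<n}"
  using knots_cover unfolding nodes_def by fastforce

lemma region_child:
  assumes c: "c \<in> nodes" and k: "k < length c"
  shows "I (take (Suc k) c) \<subseteq> I (take k c)"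
proof -
  have "set c \<subseteq> {1..J}" "length c \<le> M" using node_tuple[OF c] by (auto simp: tuples_def)
  then have "take k c \<in> tuples J k" "k < M" "c ! k \<in> {1..J}"
    using k nth_mem[OF k] by (auto simp: tuples_def dest: in_set_takeD simp del: nth_mem)
  then show ?thesis
    using region_split(1)[of k "take k c"] k by (auto simp: take_Suc_conv_app_nth)
qed

lemma region_mono:
  assumes "c \<in> nodes" "k \<le> j" "j \<le> length c"
  shows "I (take j c) \<subseteq> I (take k c)"
  using assms(2,3)
proof (induction j rule: dec_induct)
  case (step j)
  then show ?case using region_child[OF assms(1), of j] by auto
qed simp

lemma region_prefix: "c \<in> nodes \<Longrightarrow> k \<le> length c \<Longrightarrow> I c \<subseteq> I (take k c)"
  using region_mono[of c k "length c"] by simp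

lemma region_below: "c \<in> nodes \<Longrightarrow> I c \<subseteq> {..<n}"
  using region_prefix[of c 0] region_root by auto

lemma regions_disjoint:
  "m \<le> M \<Longrightarrow> c \<in> tuples J m \<Longrightarrow> c' \<in> tuples J m \<Longrightarrow> c \<noteq> c' \<Longrightarrow> I c \<inter> I c' = {}"
proof (induction m arbitrary: c c')
  case 0
  then show ?case by (simp add: tuples_def)
next
  case (Suc m)
  obtain a x where c: "c = a @ [x]" "a \<in> tuples J m" "x \<in> {1..J}"
    using Suc.prems(2) by (cases c rule: rev_exhaust) (auto simp: tuples_def)
  obtain b y where c': "c' = b @ [y]" "b \<in> tuples J m" "y \<in> {1..J}"
    using Suc.prems(3) by (cases c' rule: rev_exhaust) (auto simp: tuples_def)
  have "m < M" using Suc.prems(1) by simp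
  have sub: "I c \<subseteq> I a" "I c' \<subseteq> I b"
    using region_split(1)[OF \<open>m < M\<close> c(2)] region_split(1)[OF \<open>m < M\<close> c'(2)] c c' by auto
  show ?case
  proof (cases "a = b")
    case True
    then show ?thesis
      using region_split(2)[OF \<open>m < M\<close> c(2) c(3) c'(3)] Suc.prems(4) c c' by auto
  next
    case False
    then show ?thesis using Suc.IH[OF _ c(2) c'(2)] Suc.prems(1) sub by auto
  qed
qed

lemma card_nodes: "card nodes * r = n"
proof -
  have "n = card (\<Union>c\<in>nodes. K c)"
    using knots_cover by (simp add: nodes_def)
  also have "\<dots> = (\<Sum>c\<in>nodes. card (K c))"
  proof (rule card_UN_disjoint[OF finite_nodes])
    show "\<forall>c\<in>nodes. finite (K c)"
      using knots_below finite_subset by blast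
    show "\<forall>c\<in>nodes. \<forall>c'\<in>nodes. c \<noteq> c' \<longrightarrow> K c \<inter> K c' = {}"
      using knots_disjoint by (auto simp: nodes_def)
  qed
  also have "\<dots> = card nodes * r" by (simp add: card_knots)
  finally show ?thesis by simp
qed

lemma sum_card_regions: "(\<Sum>c\<in>nodes. card (I c)) \<le> (M + 1) * n"
proof -
  have "(\<Sum>c\<in>nodes. card (I c)) = (\<Sum>m\<le>M. \<Sum>c\<in>tuples J m. card (I c))"
    unfolding nodes_def
  proof (rule sum.UNION_disjoint)
    show "\<forall>m\<in>{..M}. \<forall>m'\<in>{..M}. m \<noteq> m' \<longrightarrow> tuples J m \<inter> tuples J m' = {}"
      by (auto dest: tuples_length)
  qed (simp_all add: finite_tuples)
  also have "\<dots> \<le> (\<Sum>m\<le>M. n)"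
  proof (rule sum_mono)
    fix m assume "m \<in> {..M}"
    then have node: "c \<in> nodes" if "c \<in> tuples J m" for c using that by (auto simp: nodes_def)
    have "(\<Sum>c\<in>tuples J m. card (I c)) = card (\<Union>c\<in>tuples J m. I c)"
    proof (rule card_UN_disjoint[symmetric, OF finite_tuples])
      show "\<forall>c\<in>tuples J m. finite (I c)"
        using node region_below finite_subset[OF _ finite_lessThan] by blast
      show "\<forall>c\<in>tuples J m. \<forall>c'\<in>tuples J m. c \<noteq> c' \<longrightarrow> I c \<inter> I c' = {}"
        using regions_disjoint \<open>m \<in> {..M}\<close> by simp
    qed
    also have "\<dots> \<le> card {..<n}"
      using node region_below by (intro card_mono) auto
    finally show "(\<Sum>c\<in>tuples J m. card (I c)) \<le> n" by simp
  qed
  finally show ?thesis by simp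
qed

lemma mrd_gram_schmidt: "posdef n S \<Longrightarrow> mrd_gram_schmidt n r S K nodes"
  by unfold_locales
    (simp_all add: take_node knots_below card_knots knots_disjoint_prefix
       right_inverse_mat_inv_posdef)

lemma posdef_V: "posdef n S \<Longrightarrow> c \<in> nodes \<Longrightarrow> posdef r (mrd_V S K r (length c) c)"
  using mrd_gram_schmidt mrd_gram_schmidt.posdef_mrd_V by blast

lemma knot_region: "c \<in> nodes \<Longrightarrow> t < r \<Longrightarrow> knot K c t \<in> I c"
  using knot_mem[of K c t] knots_region[of c] card_knots[of c] knots_below[of c]
  by (metis finite_lessThan finite_subset subsetD)

definition keys :: "mrd_key set" where
  "keys = (\<lambda>(c, i, t). W_entry c i t) ` (SIGMA c:nodes. I c \<times> {..<r})
     \<union> (\<lambda>(c, i, t). B_entry c i t) ` (SIGMA c:nodes. I c \<times> {..<r})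
     \<union> (\<lambda>(d, j, i). Pivot d j i) ` (nodes \<times> {..<r} \<times> {..<r})
     \<union> (\<lambda>(d, i, j). Chol_entry d i j) ` (nodes \<times> {..<r} \<times> {..<r})
     \<union> (\<lambda>(d, i, j). Chol_inv_entry d i j) ` (nodes \<times> {..<r} \<times> {..<r})"

lemma keys_simps [simp]:
  "W_entry c i t \<in> keys \<longleftrightarrow> c \<in> nodes \<and> i \<in> I c \<and> t < r"
  "B_entry c i t \<in> keys \<longleftrightarrow> c \<in> nodes \<and> i \<in> I c \<and> t < r"
  "Pivot d j i \<in> keys \<longleftrightarrow> d \<in> nodes \<and> j < r \<and> i < r"
  "Chol_entry d i j \<in> keys \<longleftrightarrow> d \<in> nodes \<and> i < r \<and> j < r"
  "Chol_inv_entry d i j \<in> keys \<longleftrightarrow> d \<in> nodes \<and> i < r \<and> j < r"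
  unfolding keys_def by (auto simp: image_iff)

lemma finite_region: "c \<in> nodes \<Longrightarrow> finite (I c)"
  using region_below finite_subset by blast

lemma finite_regions: "finite (SIGMA c:nodes. I c \<times> {..<r})"
  by (simp add: finite_nodes finite_region)

lemma card_regions: "card (SIGMA c:nodes. I c \<times> {..<r}) \<le> (M + 1) * n * r"
proof -
  have "card (SIGMA c:nodes. I c \<times> {..<r}) = (\<Sum>c\<in>nodes. card (I c)) * r"
    by (subst card_SigmaI)
      (simp_all add: finite_nodes finite_region card_cartesian_product sum_distrib_right)
  also have "\<dots> \<le> (M + 1) * n * r"
    using sum_card_regions by (rule mult_le_mono1)
  finally show ?thesis .
qed

lemma card_node_blocks: "card (nodes \<times> {..<r} \<times> {..<r}) = n * r"
  using card_nodes by (simp add: card_cartesian_product)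

lemma finite_keys: "finite keys"
  by (simp add: keys_def finite_regions finite_nodes)

lemma card_keys: "card keys \<le> 5 * n * ((M + 1) * r)"
proof -
  let ?R = "SIGMA c:nodes. I c \<times> {..<r}" and ?B = "nodes \<times> {..<r} \<times> {..<r}"
  have "card keys \<le> card ((\<lambda>(c, i, t). W_entry c i t) ` ?R)
      + card ((\<lambda>(c, i, t). B_entry c i t) ` ?R)
      + card ((\<lambda>(d, j, i). Pivot d j i) ` ?B) + card ((\<lambda>(d, i, j). Chol_entry d i j) ` ?B)
      + card ((\<lambda>(d, i, j). Chol_inv_entry d i j) ` ?B)"
    unfolding keys_def by (rule order_trans[OF card_Un_le] add_mono order_refl)+
  also have "\<dots> \<le> card ?R + card ?R + card ?B + card ?B + card ?B"
    by (intro add_mono card_image_le) (simp_all add: finite_regions finite_nodes)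
  also have "\<dots> \<le> (M + 1) * n * r + (M + 1) * n * r + n * r + n * r + n * r"
    using card_regions card_node_blocks by linarith
  also have "\<dots> \<le> 5 * n * ((M + 1) * r)"
    by (simp add: algebra_simps)
  finally show ?thesis .
qed

lemma mrd_expr_refs:
  assumes "key \<in> keys"
  shows "expr_refs (mrd_expr K r key) \<subseteq> {key' \<in> keys. mrd_rank r key' < mrd_rank r key}"
proof (cases key)
  case (W_entry c i t)
  with assms have c: "c \<in> nodes" "i \<in> I c" "t < r" by auto
  have "take k c \<in> nodes" "i \<in> I (take k c)" "knot K c t \<in> I (take k c)"
    "(2 * r + 3) * k + (2 + 2 * r) < (2 * r + 3) * length c" if "k < length c" for k
    using take_node[OF c(1)] region_prefix[OF c(1), of k] knot_region[OF c(1,3)] c(2) that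
      rank_block_less[OF that, of "2 + 2 * r" r] by auto
  then show ?thesis using W_entry by (auto simp: esum_simps min_def)
next
  case (B_entry c i t)
  with assms show ?thesis by (auto simp: esum_simps)
next
  case (Pivot d j i)
  with assms show ?thesis using knot_region[of d i] by (auto simp: esum_simps)
next
  case (Chol_entry d i j)
  with assms show ?thesis by auto
next
  case (Chol_inv_entry d i j)
  with assms show ?thesis by (auto simp: esum_simps)
qed

lemma mrd_expr_value:
  assumes S: "posdef n S" and "key \<in> keys"
  shows "expr_defined (mrd_value S K r) S (mrd_expr K r key) \<and>
    eval_expr (mrd_value S K r) S (mrd_expr K r key) = mrd_value S K r key"
proof (cases key)
  case (W_entry c i t)
  with assms have c: "c \<in> nodes" by auto
  have "posdef r (mrd_V S K r k (take k c))" if "k < length c" for k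
    using posdef_V[OF S take_node[OF c], of k] that by (simp add: min_def)
  then show ?thesis
    using W_entry mrd_W_eq_minus_BBt[where c = c and S = S and K = K and r = r and i = i and t = t]
    by (simp add: esum_simps sum_list_map_upt)
next
  case (B_entry c i t)
  with assms show ?thesis
    using mrd_B_eq_lower_inv[OF posdef_V[OF S]] by (simp add: esum_simps sum_list_map_upt)
next
  case (Pivot d j i)
  let ?V = "mrd_V S K r (length d) d"
  from Pivot assms have d: "d \<in> nodes" "j < r" by auto
  have "ldl_col ?V k k \<noteq> 0" if "k < j" for k
    using ldl_col_pos[OF posdef_V[OF S d(1)], of k] that d(2) by simp
  moreover have "ldl_col ?V j i = ?V i j - (\<Sum>k<j. ldl_col ?V k i * ldl_col ?V k j / ldl_col ?V k k)"
    by (rule ldl_col.simps)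
  ultimately show ?thesis
    using Pivot by (simp add: esum_simps sum_list_map_upt mrd_V_eq_mrd_W)
next
  case (Chol_entry d i j)
  from Chol_entry assms have "d \<in> nodes" "j < r" by auto
  then have "ldl_col (mrd_V S K r (length d) d) j j > 0"
    using ldl_col_pos[OF posdef_V[OF S]] by blast
  then show ?thesis
    using Chol_entry by (simp add: chol_factor_def)
next
  case (Chol_inv_entry d i j)
  let ?L = "chol_factor (mrd_V S K r (length d) d)"
  from Chol_inv_entry assms have "d \<in> nodes" "i < r" by auto
  then have "?L i i \<noteq> 0"
    using lower_triangular_chol_factor[OF posdef_V[OF S]] by (simp add: lower_triangular_def)
  moreover have "lower_inv ?L i j =
      ((if i = j then 1 else 0) - (\<Sum>k<i. ?L i k * lower_inv ?L k j)) / ?L i i"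
    by (rule lower_inv.simps)
  ultimately show ?thesis
    using Chol_inv_entry by (simp add: esum_simps sum_list_map_upt)
qed

lemma mrd_expr_size:
  assumes "key \<in> keys"
  shows "expr_size (mrd_expr K r key) \<le> 7 * ((M + 1) * r)"
proof (cases key)
  case (W_entry c i t)
  with assms have "length c \<le> M" "1 \<le> r" using node_tuple by auto
  then have "length c * (2 + 2 * r) \<le> M * (4 * r)" by (intro mult_le_mono) auto
  with \<open>1 \<le> r\<close> show ?thesis using W_entry by (simp add: esum_simps sum_list_map_upt algebra_simps)
next
  case (B_entry c i t)
  with assms show ?thesis by (simp add: esum_simps sum_list_map_upt algebra_simps)
next
  case (Pivot d j i)
  with assms show ?thesis by (simp add: esum_simps sum_list_map_upt algebra_simps)
next
  case (Chol_entry d i j)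
  with assms show ?thesis by (simp add: algebra_simps)
next
  case (Chol_inv_entry d i j)
  with assms show ?thesis by (simp add: esum_simps sum_list_map_upt algebra_simps)
qed

lemma mrd_program:
  obtains P out where "length P \<le> 35 * n * ((M + 1) * r)\<^sup>2"
    and "\<And>S. posdef n S \<Longrightarrow> prog_ok P S \<and> (\<forall>c\<in>nodes. \<forall>i\<in>I c. \<forall>t<r.
           out c i t < length P \<and> eval_prog P S ! out c i t = mrd_B S K r c i t)"
proof -
  obtain P loc where len: "length P = (\<Sum>key\<in>keys. expr_size (mrd_expr K r key))"
    and computes: "\<And>S. posdef n S \<Longrightarrow> program_computes P loc (mrd_value S K r) S keys"
    using ranked_system_program[OF finite_keys mrd_expr_refs mrd_expr_value] by blast
  have "length P \<le> card keys * (7 * ((M + 1) * r))"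
    unfolding len using sum_bounded_above[OF mrd_expr_size] by simp
  also have "\<dots> \<le> 5 * n * ((M + 1) * r) * (7 * ((M + 1) * r))"
    using card_keys by (rule mult_le_mono1)
  also have "\<dots> = 35 * n * ((M + 1) * r)\<^sup>2"
    by (simp add: power2_eq_square)
  finally show ?thesis
    using that[of P "\<lambda>c i t. loc (B_entry c i t)"] computes by (auto simp: program_computes_def)
qed

end

theorem proposition5:
  shows "\<exists>C::nat. \<forall>n J M r I K. mrd_structure n J M r I K \<longrightarrow>
     (\<exists>(P::instr list) (out::nat list \<Rightarrow> nat \<Rightarrow> nat \<Rightarrow> nat).
        length P \<le> C * n * ((M + 1) * r)\<^sup>2 \<and>
        (\<forall>S. posdef n S \<longrightarrow>
           prog_ok P S \<and>
           (\<forall>m\<le>M. \<forall>js\<in>tuples J m. \<forall>i\<in>I js. \<forall>t<r.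
              out js i t < length P \<and> eval_prog P S ! out js i t = mrd_B S K r js i t)))"
proof (intro exI[of _ 35] allI impI)
  fix n J M r I K assume "mrd_structure n J M r I K"
  then interpret mrd_setting n J M r I K by unfold_locales
  obtain P out where "length P \<le> 35 * n * ((M + 1) * r)\<^sup>2"
    and "\<And>S. posdef n S \<Longrightarrow> prog_ok P S \<and> (\<forall>c\<in>nodes. \<forall>i\<in>I c. \<forall>t<r.
           out c i t < length P \<and> eval_prog P S ! out c i t = mrd_B S K r c i t)"
    using mrd_program by blast
  moreover have "js \<in> nodes" if "m \<le> M" "js \<in> tuples J m" for m js
    using that by (auto simp: nodes_def)
  ultimately show "\<exists>P out. length P \<le> 35 * n * ((M + 1) * r)\<^sup>2 \<and>
        (\<forall>S. posdef n S \<longrightarrow> prog_ok P S \<and>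
           (\<forall>m\<le>M. \<forall>js\<in>tuples J m. \<forall>i\<in>I js. \<forall>t<r.
              out js i t < length P \<and> eval_prog P S ! out js i t = mrd_B S K r js i t))"
    by blast
qed

end
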